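(* Let $(G,s,t)$ be an oriented serial superedge whose principal subgraphs are $(G_1,s_1,t_1),\dots,(G_k,s_k,t_k)$, where $s=s_1$, $t_i=s_{i+1}$ for $1\le i\le k$, and $s_{k+1}=t$, and suppose each $G_i$ is non-serial. Then $\mathrm{Aut}_{\mathrm{or}}(G,s,t)\cong\prod_{i=1}^k\mathrm{Aut}_{\mathrm{or}}(G_i,s_i,t_i)$.
   Context: All graphs are finite, simple and undirected. An oriented series-parallel graph is a triple $(G,s,t)$ where $G$ is a graph and $s\neq t$ are vertices, defined recursively: (i) $G$ is a single edge with vertex set $\{s,t\}$; or (ii) (serial superedge) there are $k\ge 2$ oriented series-parallel graphs $(G_1,s_1,t_1),\dots,(G_k,s_k,t_k)$ with $s_1=s$, $t_k=t$, $t_i=s_{i+1}$ for $1\le i<k$, $V(G_i)\cap V(G_{i+1})=\{s_{i+1}\}$, $V(G_i)\cap V(G_j)=\emptyset$ for $|i-j|\ge2$, and $G=G_1\cup\dots\cup G_k$; or (iii) (parallel superedge) there are $k\ge2$ oriented series-parallel graphs $(G_1,s,t),\dots,(G_k,s,t)$ with $V(G_i)\cap V(G_j)=\{s,t\}$ for $i\neq j$ and $G=G_1\cup\dots\cup G_k$. The $G_i$ are the principal subgraphs. A graph is non-serial if it is not a serial superedge. For an oriented series-parallel graph $(H,u,v)$, $\mathrm{Aut}_{\mathrm{or}}(H,u,v)$ is the group of automorphisms of $H$ fixing both $u$ and $v$. *)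

theory Defs
  imports Main "HOL-Algebra.Product_Groups"
begin

(* A graph is given by a vertex set V :: 'a set and an edge set E :: 'a set set
   (edges are 2-element vertex sets).  A component of a decomposition is a
   quadruple (V_i, E_i, s_i, t_i). *)
type_synonym 'a comp = "'a set \<times> 'a set set \<times> 'a \<times> 'a"

definition cV :: "'a comp \<Rightarrow> 'a set" where "cV c = fst c"
definition cE :: "'a comp \<Rightarrow> 'a set set" where "cE c = fst (snd c)"
definition cs :: "'a comp \<Rightarrow> 'a" where "cs c = fst (snd (snd c))"
definition ct :: "'a comp \<Rightarrow> 'a" where "ct c = snd (snd (snd c))"

(* Condition (ii), without the requirement that the pieces are oriented SP graphs *)
definition serial_cond :: "'a set \<Rightarrow> 'a set set \<Rightarrow> 'a \<Rightarrow> 'a \<Rightarrow> 'a comp list \<Rightarrow> bool" where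
  "serial_cond V E s t Gs \<longleftrightarrow>
     length Gs \<ge> 2 \<and>
     cs (Gs ! 0) = s \<and> ct (Gs ! (length Gs - 1)) = t \<and>
     (\<forall>i. Suc i < length Gs \<longrightarrow>
          ct (Gs ! i) = cs (Gs ! Suc i) \<and>
          cV (Gs ! i) \<inter> cV (Gs ! Suc i) = {cs (Gs ! Suc i)}) \<and>
     (\<forall>i j. i < length Gs \<and> j < length Gs \<and> i + 2 \<le> j \<longrightarrow> cV (Gs ! i) \<inter> cV (Gs ! j) = {}) \<and>
     V = (\<Union>i<length Gs. cV (Gs ! i)) \<and> E = (\<Union>i<length Gs. cE (Gs ! i))"

(* Condition (iii), without the requirement that the pieces are oriented SP graphs *)
definition parallel_cond :: "'a set \<Rightarrow> 'a set set \<Rightarrow> 'a \<Rightarrow> 'a \<Rightarrow> 'a comp list \<Rightarrow> bool" where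
  "parallel_cond V E s t Gs \<longleftrightarrow>
     length Gs \<ge> 2 \<and>
     (\<forall>i < length Gs. cs (Gs ! i) = s \<and> ct (Gs ! i) = t) \<and>
     (\<forall>i j. i < length Gs \<and> j < length Gs \<and> i \<noteq> j \<longrightarrow> cV (Gs ! i) \<inter> cV (Gs ! j) = {s, t}) \<and>
     V = (\<Union>i<length Gs. cV (Gs ! i)) \<and> E = (\<Union>i<length Gs. cE (Gs ! i))"

inductive osp :: "'a set \<Rightarrow> 'a set set \<Rightarrow> 'a \<Rightarrow> 'a \<Rightarrow> bool" where
  edge: "s \<noteq> t \<Longrightarrow> osp {s, t} {{s, t}} s t"
| serial: "serial_cond V E s t Gs \<Longrightarrow>
           \<forall>i < length Gs. osp (cV (Gs ! i)) (cE (Gs ! i)) (cs (Gs ! i)) (ct (Gs ! i)) \<Longrightarrow>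
           osp V E s t"
| parallel: "parallel_cond V E s t Gs \<Longrightarrow>
           \<forall>i < length Gs. osp (cV (Gs ! i)) (cE (Gs ! i)) (cs (Gs ! i)) (ct (Gs ! i)) \<Longrightarrow>
           osp V E s t"

definition serial_superedge :: "'a set \<Rightarrow> 'a set set \<Rightarrow> 'a \<Rightarrow> 'a \<Rightarrow> bool" where
  "serial_superedge V E s t \<longleftrightarrow>
     (\<exists>Gs. serial_cond V E s t Gs \<and>
           (\<forall>i < length Gs. osp (cV (Gs ! i)) (cE (Gs ! i)) (cs (Gs ! i)) (ct (Gs ! i))))"

definition non_serial :: "'a set \<Rightarrow> 'a set set \<Rightarrow> 'a \<Rightarrow> 'a \<Rightarrow> bool" where
  "non_serial V E s t \<longleftrightarrow> \<not> serial_superedge V E s t"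

(* Aut_or(G,s,t): automorphisms of G fixing s and t, as a group of permutations
   of V (extended by the identity outside V) under composition *)
definition Aut_or :: "'a set \<Rightarrow> 'a set set \<Rightarrow> 'a \<Rightarrow> 'a \<Rightarrow> ('a \<Rightarrow> 'a) monoid" where
  "Aut_or V E s t = \<lparr> carrier = {f. bij_betw f V V \<and> (\<lambda>e. f ` e) ` E = E \<and>
                                    f s = s \<and> f t = t \<and> (\<forall>x. x \<notin> V \<longrightarrow> f x = x)},
                     monoid.mult = (\<lambda>f g. f \<circ> g),
                     one = id \<rparr>"

end

(* An automorphism f of G fixing s and t preserves, for every vertex v, the set of vertices
   u \<noteq> s whose removal separates v from s.  As no piece G_i has a vertex separating s_i from t_i,
   the separators of s_(j+1) are exactly s_2, ..., s_(j+1); counting them shows that f fixes every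
   s_j.  The first l pieces consist of s_(l+1) and the vertices that s reaches avoiding s_(l+1), so
   f maps each piece onto itself.  Restriction to the pieces is thus a homomorphism into the
   product; it is injective since the pieces cover G, and surjective since automorphisms of the
   pieces glue along the shared vertices s_j, which they all fix. *)

theory Submission
  imports Defs
begin

definition adj :: "'a set set \<Rightarrow> 'a set \<Rightarrow> 'a \<Rightarrow> 'a \<Rightarrow> bool" where
  "adj E W x y \<longleftrightarrow> {x, y} \<in> E \<and> x \<in> W \<and> y \<in> W"

(* Note that reach E W a a holds even if a \<notin> W. *)
abbreviation reach :: "'a set set \<Rightarrow> 'a set \<Rightarrow> 'a \<Rightarrow> 'a \<Rightarrow> bool" where
  "reach E W \<equiv> (adj E W)\<^sup>*\<^sup>*"

lemma reach_edge: "{a, b} \<in> E \<Longrightarrow> a \<in> W \<Longrightarrow> b \<in> W \<Longrightarrow> reach E W a b"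
  by (simp add: adj_def r_into_rtranclp)

lemma reach_mono: "reach E W a b \<Longrightarrow> E \<subseteq> E' \<Longrightarrow> W \<subseteq> W' \<Longrightarrow> reach E' W' a b"
  using rtranclp_mono[of "adj E W" "adj E' W'"] by (auto simp: adj_def le_fun_def)

lemma reach_target_mem: "reach E W a b \<Longrightarrow> a \<in> W \<Longrightarrow> b \<in> W"
  by (induction rule: rtranclp_induct) (auto simp: adj_def)

lemma rtranclp_chain:
  assumes "\<And>p. a \<le> p \<Longrightarrow> p < b \<Longrightarrow> r\<^sup>*\<^sup>* (c p) (c (Suc p))" and "a \<le> b"
  shows "r\<^sup>*\<^sup>* (c a) (c b)"
  using assms(2,1) by (induction b rule: dec_induct) (auto intro: rtranclp_trans)

lemma reach_image_iff:
  assumes "inj f" and edge_iff: "\<And>x y. {f x, f y} \<in> E \<longleftrightarrow> {x, y} \<in> E"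
  shows "reach E (f ` W) (f a) (f b) \<longleftrightarrow> reach E W a b"
proof
  have "reach E W a (inv_into UNIV f y)" if "reach E (f ` W) (f a) y" for y
    using that
  proof (induction rule: rtranclp_induct)
    case base
    show ?case using \<open>inj f\<close> by simp
  next
    case (step y z)
    then have "adj E W (inv_into UNIV f y) (inv_into UNIV f z)"
      using \<open>inj f\<close> edge_iff[of "inv_into UNIV f y" "inv_into UNIV f z"] by (auto simp: adj_def)
    with step.IH show ?case by (rule rtranclp.rtrancl_into_rtrancl)
  qed
  then show "reach E (f ` W) (f a) (f b) \<Longrightarrow> reach E W a b"
    using \<open>inj f\<close> by fastforce
next
  show "reach E W a b \<Longrightarrow> reach E (f ` W) (f a) (f b)"
    by (induction rule: rtranclp_induct)
      (auto simp: adj_def edge_iff intro: rtranclp.rtrancl_into_rtrancl)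
qed

lemma carrier_Aut_or:
  "f \<in> carrier (Aut_or V E s t) \<longleftrightarrow>
     bij_betw f V V \<and> (\<lambda>e. f ` e) ` E = E \<and> f s = s \<and> f t = t \<and> (\<forall>x. x \<notin> V \<longrightarrow> f x = x)"
  by (simp add: Aut_or_def)

lemma mult_Aut_or [simp]: "f \<otimes>\<^bsub>Aut_or V E s t\<^esub> g = f \<circ> g"
  by (simp add: Aut_or_def)

definition separators :: "'a set \<Rightarrow> 'a set set \<Rightarrow> 'a \<Rightarrow> 'a \<Rightarrow> 'a set" where
  "separators V E s v = {u \<in> V - {s}. \<not> reach E (V - {u}) s v}"

context
  fixes f V E s t
  assumes f: "f \<in> carrier (Aut_or V E s t)"
begin

lemma Aut_or_mem_iff: "f x \<in> V \<longleftrightarrow> x \<in> V"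
  using f by (auto simp: carrier_Aut_or bij_betw_apply)

lemma Aut_or_image: "f ` V = V"
  using f by (simp add: carrier_Aut_or bij_betw_def)

lemma Aut_or_inj: "inj f"
proof (rule injI)
  fix x y
  assume "f x = f y"
  moreover have "inj_on f V" and "\<forall>x. x \<notin> V \<longrightarrow> f x = x"
    using f by (auto simp: carrier_Aut_or bij_betw_def)
  ultimately show "x = y"
    using Aut_or_mem_iff[of x] Aut_or_mem_iff[of y] by (metis inj_onD)
qed

lemma Aut_or_edge_iff: "{f x, f y} \<in> E \<longleftrightarrow> {x, y} \<in> E"
proof -
  have "{f x, f y} \<in> E \<longleftrightarrow> f ` {x, y} \<in> (\<lambda>e. f ` e) ` E"
    using f by (simp add: carrier_Aut_or)
  also have "\<dots> \<longleftrightarrow> {x, y} \<in> E"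
    using Aut_or_inj by (simp add: inj_image_mem_iff inj_on_def inj_image_eq_iff del: image_insert)
  finally show ?thesis .
qed

lemma Aut_or_reach_avoiding_iff:
  "reach E (V - {f u}) (f a) (f b) \<longleftrightarrow> reach E (V - {u}) a b"
proof -
  have "f ` (V - {u}) = V - {f u}"
    using Aut_or_inj Aut_or_image by (simp add: image_set_diff)
  then show ?thesis
    using reach_image_iff[OF Aut_or_inj Aut_or_edge_iff] by metis
qed

lemma Aut_or_surj: "surj f"
proof -
  have "y \<in> range f" for y
  proof (cases "y \<in> V")
    case True
    then show ?thesis using Aut_or_image by blast
  next
    case False
    then have "f y = y" using f by (simp add: carrier_Aut_or)
    then show ?thesis by (metis rangeI)
  qed
  then show ?thesis by blast
qed

lemma Aut_or_image_eq: "(\<And>x. f x \<in> A \<longleftrightarrow> x \<in> A) \<Longrightarrow> f ` A = A"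
  using surj_image_vimage_eq[OF Aut_or_surj, of A] by (simp add: vimage_def)

lemma separators_Aut_or: "separators V E s (f v) = f ` separators V E s v"
proof -
  have fs: "f s = s" using f by (simp add: carrier_Aut_or)
  have "f u \<in> separators V E s (f v) \<longleftrightarrow> u \<in> separators V E s v" for u
    using Aut_or_mem_iff Aut_or_reach_avoiding_iff[of u s v] fs Aut_or_inj
    by (auto simp: separators_def dest: injD)
  then show ?thesis
    using surj_image_vimage_eq[OF Aut_or_surj, of "separators V E s (f v)"] by (simp add: vimage_def)
qed

end

lemma restrict_in_Aut_or:
  assumes "inj_on f W" "f ` W = W" "(\<lambda>e. f ` e) ` F = F" "\<And>e. e \<in> F \<Longrightarrow> e \<subseteq> W"
    and "a \<in> W" "b \<in> W" "f a = a" "f b = b"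
  shows "(\<lambda>x. if x \<in> W then f x else x) \<in> carrier (Aut_or W F a b)"
proof -
  let ?g = "\<lambda>x. if x \<in> W then f x else x"
  have "bij_betw ?g W W"
    using assms(1,2) by (simp add: bij_betw_def inj_on_def)
  moreover have "(\<lambda>e. ?g ` e) ` F = (\<lambda>e. f ` e) ` F"
  proof (rule image_cong[OF refl])
    fix e assume "e \<in> F"
    then show "?g ` e = f ` e" using assms(4) by (intro image_cong) auto
  qed
  ultimately show ?thesis using assms(3,5-8) by (simp add: carrier_Aut_or)
qed

definition two_terminal :: "'a set \<Rightarrow> 'a set set \<Rightarrow> 'a \<Rightarrow> 'a \<Rightarrow> bool" where
  "two_terminal V E s t \<longleftrightarrow> s \<noteq> t \<and> s \<in> V \<and> t \<in> V \<and>
     (\<forall>e\<in>E. \<exists>x y. x \<noteq> y \<and> e = {x, y} \<and> x \<in> V \<and> y \<in> V) \<and>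
     reach E V s t \<and> (\<forall>v\<in>V - {t}. reach E (V - {t}) s v)"

definition no_separating_vertex :: "'a set \<Rightarrow> 'a set set \<Rightarrow> 'a \<Rightarrow> 'a \<Rightarrow> bool" where
  "no_separating_vertex V E s t \<longleftrightarrow> (\<forall>u. u \<noteq> s \<longrightarrow> u \<noteq> t \<longrightarrow> reach E (V - {u}) s t)"

locale serial_decomposition =
  fixes V :: "'a set" and E :: "'a set set" and s t :: 'a and Gs :: "'a comp list"
  assumes serial: "serial_cond V E s t Gs"
    and two_terminal_pieces:
      "\<And>i. i < length Gs \<Longrightarrow> two_terminal (cV (Gs ! i)) (cE (Gs ! i)) (cs (Gs ! i)) (ct (Gs ! i))"
begin

abbreviation piece_V :: "nat \<Rightarrow> 'a set" where "piece_V i \<equiv> cV (Gs ! i)"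
abbreviation piece_E :: "nat \<Rightarrow> 'a set set" where "piece_E i \<equiv> cE (Gs ! i)"

(* joint j is s_(j+1) in the notation of the statement: joint 0 = s, joint (length Gs) = t. *)
definition joint :: "nat \<Rightarrow> 'a" where
  "joint j = (if j < length Gs then cs (Gs ! j) else t)"

lemma length_pos: "0 < length Gs"
  using serial by (auto simp: serial_cond_def)

lemma joint_0: "joint 0 = s"
  using serial length_pos by (simp add: serial_cond_def joint_def)

lemma joint_length: "joint (length Gs) = t"
  by (simp add: joint_def)

lemma cs_eq_joint: "i < length Gs \<Longrightarrow> cs (Gs ! i) = joint i"
  by (simp add: joint_def)

lemma ct_eq_joint:
  assumes "i < length Gs"
  shows "ct (Gs ! i) = joint (Suc i)"
proof (cases "Suc i < length Gs")
  case True
  then show ?thesis using serial by (simp add: serial_cond_def joint_def)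
next
  case False
  then have "i = length Gs - 1" using assms by simp
  then show ?thesis using serial False by (simp add: serial_cond_def joint_def)
qed

lemma two_terminal_piece: "i < length Gs \<Longrightarrow> two_terminal (piece_V i) (piece_E i) (joint i) (joint (Suc i))"
  using two_terminal_pieces cs_eq_joint ct_eq_joint by metis

lemma joint_in_piece:
  "i < length Gs \<Longrightarrow> joint i \<in> piece_V i" "i < length Gs \<Longrightarrow> joint (Suc i) \<in> piece_V i"
  using two_terminal_piece by (auto simp: two_terminal_def)

lemma V_eq: "V = (\<Union>i<length Gs. piece_V i)"
  using serial by (simp add: serial_cond_def)

lemma E_eq: "E = (\<Union>i<length Gs. piece_E i)"
  using serial by (simp add: serial_cond_def)

lemma piece_V_subset: "i < length Gs \<Longrightarrow> piece_V i \<subseteq> V"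
  using V_eq by auto

lemma piece_E_subset: "i < length Gs \<Longrightarrow> piece_E i \<subseteq> E"
  using E_eq by auto

lemma piece_inter:
  assumes "i < j" "j < length Gs" "x \<in> piece_V i" "x \<in> piece_V j"
  shows "j = Suc i \<and> x = joint j"
proof (cases "j = Suc i")
  case True
  then show ?thesis using serial assms by (auto simp: serial_cond_def joint_def)
next
  case False
  then have "Suc (Suc i) \<le> j" using assms(1) by simp
  then have "piece_V i \<inter> piece_V j = {}" using serial assms(2) by (simp add: serial_cond_def)
  then show ?thesis using assms(3,4) by blast
qed

lemma joint_inj: "i < j \<Longrightarrow> j \<le> length Gs \<Longrightarrow> joint i \<noteq> joint j"
proof (induction j arbitrary: i)
  case (Suc j)
  have "joint (Suc j) \<noteq> joint j" "joint (Suc j) \<in> piece_V j"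
    using two_terminal_piece[of j] Suc.prems by (auto simp: two_terminal_def)
  moreover have "joint (Suc j) \<noteq> joint i" if "i < j"
    using piece_inter[of i j "joint i"] joint_in_piece[of i] calculation that Suc.prems
    by auto
  ultimately show ?case using Suc.prems by (metis less_antisym)
qed simp

lemma inj_on_joint: "inj_on joint {..length Gs}"
proof (rule inj_onI)
  fix x y assume "x \<in> {..length Gs}" "y \<in> {..length Gs}" "joint x = joint y"
  then show "x = y" using joint_inj[of x y] joint_inj[of y x] by (cases x y rule: linorder_cases) auto
qed

lemma joint_in_piece_ex:
  assumes "j \<le> length Gs"
  obtains n where "n < length Gs" "joint j \<in> piece_V n" "j = n \<or> j = Suc n"
proof (cases "j < length Gs")
  case True
  then show ?thesis using that joint_in_piece(1) by blast
next
  case False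
  then have "j = Suc (j - 1)" "j - 1 < length Gs" using assms length_pos by auto
  then show ?thesis using that joint_in_piece(2)[of "j - 1"] by metis
qed

lemma joint_in_piece_iff:
  assumes "j \<le> length Gs" "m < length Gs"
  shows "joint j \<in> piece_V m \<longleftrightarrow> j = m \<or> j = Suc m"
proof
  assume j: "joint j \<in> piece_V m"
  obtain n where n: "n < length Gs" "joint j \<in> piece_V n" "j = n \<or> j = Suc n"
    using joint_in_piece_ex[OF assms(1)] .
  show "j = m \<or> j = Suc m"
  proof (cases m n rule: linorder_cases)
    case less
    then show ?thesis
      using piece_inter[OF less n(1) j n(2)] n(3) joint_inj[of n j] assms(1) by auto
  next
    case greater
    then show ?thesis
      using piece_inter[OF greater assms(2) n(2) j] n(3) joint_inj[of j m] assms(2) by auto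
  qed (use n in simp)
qed (use assms joint_in_piece in auto)

lemma joint_in_V: "j \<le> length Gs \<Longrightarrow> joint j \<in> V"
  by (metis joint_in_piece_ex piece_V_subset subsetD)

lemma piece_edge:
  "i < length Gs \<Longrightarrow> e \<in> piece_E i \<Longrightarrow>
    \<exists>x y. x \<noteq> y \<and> e = {x, y} \<and> x \<in> piece_V i \<and> y \<in> piece_V i"
  using two_terminal_piece by (auto simp: two_terminal_def)

lemma piece_edge_subset: "i < length Gs \<Longrightarrow> e \<in> piece_E i \<Longrightarrow> e \<subseteq> piece_V i"
  using piece_edge by blast

lemma edge_in_piece_E:
  assumes "e \<in> E" "i < length Gs" "e \<subseteq> piece_V i"
  shows "e \<in> piece_E i"
proof -
  obtain j where j: "j < length Gs" "e \<in> piece_E j" using assms(1) E_eq by auto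
  obtain x y where xy: "x \<noteq> y" "e = {x, y}" "x \<in> piece_V j" "y \<in> piece_V j"
    using piece_edge[OF j] by blast
  have "i = j"
  proof (rule ccontr)
    assume "i \<noteq> j"
    then have "x = y"
      using piece_inter[of i j] piece_inter[of j i] xy assms j by (cases "i < j") auto
    with xy(1) show False ..
  qed
  then show ?thesis using j by simp
qed

lemma reach_piece: "i < length Gs \<Longrightarrow> reach E (piece_V i) (joint i) (joint (Suc i))"
  using two_terminal_piece piece_E_subset by (meson two_terminal_def reach_mono subset_refl)

lemma piece_V_avoids_joint:
  "q < length Gs \<Longrightarrow> Suc q < l \<Longrightarrow> l \<le> length Gs \<Longrightarrow> piece_V q \<subseteq> V - {joint l}"
  using joint_in_piece_iff[of l q] piece_V_subset[of q] by fastforce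

lemma reach_joint_avoiding:
  assumes "p < l" "l \<le> length Gs"
  shows "reach E (V - {joint l}) s (joint p)"
proof -
  have "reach E (V - {joint l}) (joint 0) (joint p)"
  proof (rule rtranclp_chain)
    fix q assume "0 \<le> q" "q < p"
    then show "reach E (V - {joint l}) (joint q) (joint (Suc q))"
      using assms by (intro reach_mono[OF reach_piece subset_refl piece_V_avoids_joint]) auto
  qed simp
  then show ?thesis by (simp add: joint_0)
qed

definition prefix :: "nat \<Rightarrow> 'a set" where
  "prefix l = (\<Union>p<l. piece_V p)"

lemma prefix_length: "prefix (length Gs) = V"
  by (simp add: prefix_def V_eq)

lemma reach_avoiding_joint_in_prefix:
  assumes "reach E (V - {joint l}) s v" "0 < l" "l \<le> length Gs"
  shows "v \<in> prefix l"
  using assms(1)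
proof (induction rule: rtranclp_induct)
  case base
  show ?case using joint_in_piece(1)[of 0] length_pos joint_0 assms(2) by (auto simp: prefix_def)
next
  case (step b x)
  obtain p where p: "p < l" "b \<in> piece_V p" using step.IH by (auto simp: prefix_def)
  have bx: "{b, x} \<in> E" "b \<noteq> joint l" using step.hyps(2) by (auto simp: adj_def)
  obtain m where m: "m < length Gs" "{b, x} \<in> piece_E m" using bx(1) E_eq by auto
  then have "b \<in> piece_V m" "x \<in> piece_V m" using piece_edge_subset by blast+
  show ?case
  proof (cases "m < l")
    case True
    then show ?thesis using \<open>x \<in> piece_V m\<close> by (auto simp: prefix_def)
  next
    case False
    then have "m = Suc p" "b = joint m" using piece_inter[OF _ m(1) p(2) \<open>b \<in> piece_V m\<close>] p(1) by simp_all
    moreover from this(1) have "m = l" using p(1) False by linarith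
    ultimately show ?thesis using bx(2) by simp
  qed
qed

lemma prefix_eq:
  assumes "0 < l" "l \<le> length Gs"
  shows "prefix l = insert (joint l) {v. reach E (V - {joint l}) s v}"
proof
  have "joint l \<in> piece_V (l - 1)" "l - 1 < l"
    using joint_in_piece(2)[of "l - 1"] assms by auto
  then have "joint l \<in> prefix l" by (auto simp: prefix_def)
  then show "insert (joint l) {v. reach E (V - {joint l}) s v} \<subseteq> prefix l"
    using reach_avoiding_joint_in_prefix[OF _ assms] by auto
next
  show "prefix l \<subseteq> insert (joint l) {v. reach E (V - {joint l}) s v}"
  proof
    fix v assume "v \<in> prefix l"
    then obtain p where p: "p < l" "v \<in> piece_V p" by (auto simp: prefix_def)
    show "v \<in> insert (joint l) {v. reach E (V - {joint l}) s v}"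
    proof (cases "v = joint (Suc p)")
      case True
      then show ?thesis using reach_joint_avoiding[of "Suc p" l] p(1) assms(2) by (cases "Suc p = l") auto
    next
      case False
      have "reach (piece_E p) (piece_V p - {joint (Suc p)}) (joint p) v"
        using two_terminal_piece[of p] p assms(2) False by (simp add: two_terminal_def)
      moreover have "piece_V p - {joint (Suc p)} \<subseteq> V - {joint l}"
        using joint_in_piece_iff[of l p] piece_V_subset[of p] p assms(2) by auto
      ultimately have "reach E (V - {joint l}) (joint p) v"
        using p(1) assms(2) by (intro reach_mono[OF _ piece_E_subset]) auto
      with reach_joint_avoiding[OF p(1) assms(2)] have "reach E (V - {joint l}) s v"
        by (rule rtranclp_trans)
      then show ?thesis by simp
    qed
  qed
qed

lemma joint_in_separators:
  assumes l: "0 < l" "l \<le> j" and j: "j \<le> length Gs"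
  shows "joint l \<in> separators V E s (joint j)"
proof -
  have u: "joint l \<in> V - {s}"
    using joint_in_V[of l] joint_inj[of 0 l] joint_0 l j by auto
  moreover have "\<not> reach E (V - {joint l}) s (joint j)"
  proof
    assume r: "reach E (V - {joint l}) s (joint j)"
    have "s \<in> V - {joint l}" using u joint_in_V[of 0] joint_0 j by auto
    then have "joint j \<noteq> joint l" using reach_target_mem[OF r] by auto
    then have "l < j" using l by (cases "l = j") auto
    obtain p where "p < l" "joint j \<in> piece_V p"
      using reach_avoiding_joint_in_prefix[OF r] l j by (auto simp: prefix_def)
    then show False using joint_in_piece_iff[of j p] \<open>l < j\<close> j by auto
  qed
  ultimately show ?thesis by (simp add: separators_def)
qed

lemma two_terminal_serial: "two_terminal V E s t"
  unfolding two_terminal_def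
proof (intro conjI ballI)
  show "s \<noteq> t" using joint_inj[of 0 "length Gs"] length_pos joint_0 joint_length by simp
  show "s \<in> V" "t \<in> V" using joint_in_V[of 0] joint_in_V[of "length Gs"] joint_0 joint_length by auto
next
  fix e assume "e \<in> E"
  then obtain i where "i < length Gs" "e \<in> piece_E i" using E_eq by auto
  then show "\<exists>x y. x \<noteq> y \<and> e = {x, y} \<and> x \<in> V \<and> y \<in> V"
    using piece_edge piece_V_subset by (meson subsetD)
next
  have "reach E V (joint 0) (joint (length Gs))"
  proof (rule rtranclp_chain)
    fix q assume "0 \<le> q" "q < length Gs"
    then show "reach E V (joint q) (joint (Suc q))"
      by (intro reach_mono[OF reach_piece subset_refl piece_V_subset])
  qed simp
  then show "reach E V s t" by (simp add: joint_0 joint_length)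
next
  fix v assume "v \<in> V - {t}"
  then show "reach E (V - {t}) s v"
    using prefix_eq[of "length Gs"] length_pos prefix_length joint_length by auto
qed

lemma piece_eq_prefix_diff:
  assumes "i < length Gs"
  shows "piece_V i = prefix (Suc i) - (prefix i - {joint i})"
proof
  show "piece_V i \<subseteq> prefix (Suc i) - (prefix i - {joint i})"
    using piece_inter[of _ i] assms by (auto simp: prefix_def)
  show "prefix (Suc i) - (prefix i - {joint i}) \<subseteq> piece_V i"
    using assms joint_in_piece(1) by (auto simp: prefix_def less_Suc_eq)
qed

end

lemma two_terminal_edge:
  assumes "s \<noteq> t"
  shows "two_terminal {s, t} {{s, t}} s t"
  unfolding two_terminal_def
proof (intro conjI ballI)
  show "reach {{s, t}} {s, t} s t" by (rule reach_edge) auto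
next
  fix v assume "v \<in> {s, t} - {t}"
  then have "v = s" by blast
  then show "reach {{s, t}} ({s, t} - {t}) s v" by simp
next
  fix e assume "e \<in> {{s, t}}"
  then show "\<exists>x y. x \<noteq> y \<and> e = {x, y} \<and> x \<in> {s, t} \<and> y \<in> {s, t}"
    using assms by blast
qed (use assms in simp_all)

lemma two_terminal_parallel:
  assumes par: "parallel_cond V E s t Gs"
    and pieces: "\<And>i. i < length Gs \<Longrightarrow> two_terminal (cV (Gs ! i)) (cE (Gs ! i)) s t"
  shows "two_terminal V E s t"
proof -
  have V: "V = (\<Union>i<length Gs. cV (Gs ! i))" and E: "E = (\<Union>i<length Gs. cE (Gs ! i))"
    and "0 < length Gs"
    using par by (auto simp: parallel_cond_def)
  have sub: "cV (Gs ! 0) \<subseteq> V" "cE (Gs ! 0) \<subseteq> E"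
    using \<open>0 < length Gs\<close> V E by auto
  have "s \<noteq> t" "s \<in> cV (Gs ! 0)" "t \<in> cV (Gs ! 0)" "reach (cE (Gs ! 0)) (cV (Gs ! 0)) s t"
    using pieces[OF \<open>0 < length Gs\<close>] by (simp_all add: two_terminal_def)
  then have "s \<noteq> t \<and> s \<in> V \<and> t \<in> V \<and> reach E V s t"
    using sub reach_mono[OF _ sub(2,1)] by auto
  moreover have "\<exists>x y. x \<noteq> y \<and> e = {x, y} \<and> x \<in> V \<and> y \<in> V" if "e \<in> E" for e
  proof -
    obtain i where i: "i < length Gs" "e \<in> cE (Gs ! i)" using \<open>e \<in> E\<close> E by auto
    then show ?thesis using pieces[OF i(1)] V by (fastforce simp: two_terminal_def)
  qed
  moreover have "reach E (V - {t}) s v" if v: "v \<in> V - {t}" for v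
  proof -
    obtain i where i: "i < length Gs" "v \<in> cV (Gs ! i)" using v V by auto
    then have "reach (cE (Gs ! i)) (cV (Gs ! i) - {t}) s v"
      using pieces[OF i(1)] v by (simp add: two_terminal_def)
    then show ?thesis by (rule reach_mono) (use i V E in auto)
  qed
  ultimately show ?thesis by (simp add: two_terminal_def)
qed

lemma osp_two_terminal: "osp V E s t \<Longrightarrow> two_terminal V E s t"
proof (induction rule: osp.induct)
  case (edge s t)
  then show ?case by (rule two_terminal_edge)
next
  case (serial V E s t Gs)
  then interpret serial_decomposition V E s t Gs by unfold_locales auto
  show ?case by (rule two_terminal_serial)
next
  case (parallel V E s t Gs)
  have "cs (Gs ! i) = s" "ct (Gs ! i) = t" if "i < length Gs" for i
    using parallel.hyps(1) that by (simp_all add: parallel_cond_def)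
  with parallel show ?case by (auto intro!: two_terminal_parallel[OF parallel.hyps(1)])
qed

lemma osp_no_separating_vertex:
  assumes "osp V E s t" "non_serial V E s t"
  shows "no_separating_vertex V E s t"
  using assms(1)
proof (cases rule: osp.cases)
  case edge
  then show ?thesis unfolding no_separating_vertex_def by (auto intro: reach_edge)
next
  case (serial Gs)
  then show ?thesis using assms(2) by (auto simp: non_serial_def serial_superedge_def)
next
  case (parallel Gs)
  have terminals: "cs (Gs ! i) = s" "ct (Gs ! i) = t" if "i < length Gs" for i
    using parallel(1) that by (simp_all add: parallel_cond_def)
  have V: "V = (\<Union>i<length Gs. cV (Gs ! i))" and E: "E = (\<Union>i<length Gs. cE (Gs ! i))"
    and "1 < length Gs"
    and disjoint: "\<forall>i j. i < length Gs \<and> j < length Gs \<and> i \<noteq> j \<longrightarrow>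
      cV (Gs ! i) \<inter> cV (Gs ! j) = {s, t}"
    using parallel(1) by (auto simp: parallel_cond_def)
  have inter01: "cV (Gs ! 0) \<inter> cV (Gs ! 1) = {s, t}"
    by (rule disjoint[rule_format]) (use \<open>1 < length Gs\<close> in auto)
  show ?thesis unfolding no_separating_vertex_def
  proof (intro allI impI)
    fix u assume "u \<noteq> s" "u \<noteq> t"
    obtain i where i: "i < length Gs" "u \<notin> cV (Gs ! i)"
    proof (cases "u \<in> cV (Gs ! 0)")
      case True
      then have "u \<notin> cV (Gs ! 1)" using inter01 \<open>u \<noteq> s\<close> \<open>u \<noteq> t\<close> by blast
      then show ?thesis using that \<open>1 < length Gs\<close> by blast
    next
      case False
      then show ?thesis using that \<open>1 < length Gs\<close> by (metis less_trans zero_less_one)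
    qed
    have "two_terminal (cV (Gs ! i)) (cE (Gs ! i)) s t"
      using osp_two_terminal parallel(2) i(1) terminals[OF i(1)] by metis
    then have "reach (cE (Gs ! i)) (cV (Gs ! i)) s t" by (simp add: two_terminal_def)
    then show "reach E (V - {u}) s t" by (rule reach_mono) (use i V E in auto)
  qed
qed

context serial_decomposition
begin

abbreviation piece_Aut :: "nat \<Rightarrow> ('a \<Rightarrow> 'a) monoid" where
  "piece_Aut i \<equiv> Aut_or (cV (Gs ! i)) (cE (Gs ! i)) (cs (Gs ! i)) (ct (Gs ! i))"

lemma piece_Aut_eq:
  "i < length Gs \<Longrightarrow> piece_Aut i = Aut_or (piece_V i) (piece_E i) (joint i) (joint (Suc i))"
  by (simp add: cs_eq_joint ct_eq_joint)

definition restrictions :: "('a \<Rightarrow> 'a) \<Rightarrow> nat \<Rightarrow> 'a \<Rightarrow> 'a" where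
  "restrictions f = (\<lambda>i\<in>{..<length Gs}. \<lambda>x. if x \<in> piece_V i then f x else x)"

(* Pieces meet only in joints, which all components fix, so the chosen piece is irrelevant. *)
definition glue :: "(nat \<Rightarrow> 'a \<Rightarrow> 'a) \<Rightarrow> 'a \<Rightarrow> 'a" where
  "glue h x =
    (if \<exists>i<length Gs. x \<in> piece_V i then h (SOME i. i < length Gs \<and> x \<in> piece_V i) x else x)"

context
  fixes h
  assumes h: "h \<in> carrier (product_group {..<length Gs} piece_Aut)"
begin

lemma component_Aut:
  assumes "i < length Gs"
  shows "h i \<in> carrier (Aut_or (piece_V i) (piece_E i) (joint i) (joint (Suc i)))"
proof -
  have "h i \<in> carrier (piece_Aut i)" using h assms by (simp add: PiE_iff)
  then show ?thesis by (simp only: piece_Aut_eq[OF assms])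
qed

lemma components_agree:
  assumes "i < j" "j < length Gs" "x \<in> piece_V i" "x \<in> piece_V j"
  shows "h i x = h j x"
proof -
  have "j = Suc i" "x = joint j" using piece_inter[OF assms] by simp_all
  then show ?thesis
    using component_Aut[of i] component_Aut[of j] assms(1,2) by (simp add: carrier_Aut_or)
qed

lemma glue_eq:
  assumes i: "i < length Gs" and x: "x \<in> piece_V i"
  shows "glue h x = h i x"
proof -
  define j where "j = (SOME i. i < length Gs \<and> x \<in> piece_V i)"
  have j: "j < length Gs" "x \<in> piece_V j"
    using someI[of "\<lambda>i. i < length Gs \<and> x \<in> piece_V i", OF conjI[OF i x]] by (simp_all add: j_def)
  then have "glue h x = h j x" by (auto simp: glue_def j_def)
  also have "\<dots> = h i x"
    using components_agree j i x by (cases i j rule: linorder_cases) auto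
  finally show ?thesis .
qed

lemma glue_image_piece_V:
  assumes i: "i < length Gs"
  shows "glue h ` piece_V i = piece_V i"
proof -
  have "glue h ` piece_V i = h i ` piece_V i" by (rule image_cong) (simp_all add: glue_eq[OF i])
  then show ?thesis using Aut_or_image[OF component_Aut[OF i]] by simp
qed

lemma glue_image_piece_E: "i < length Gs \<Longrightarrow> (\<lambda>e. glue h ` e) ` piece_E i = piece_E i"
proof -
  assume i: "i < length Gs"
  have "(\<lambda>e. glue h ` e) ` piece_E i = (\<lambda>e. h i ` e) ` piece_E i"
  proof (rule image_cong[OF refl])
    fix e assume "e \<in> piece_E i"
    then show "glue h ` e = h i ` e"
      using piece_edge_subset[OF i] glue_eq[OF i] by (intro image_cong) auto
  qed
  also have "\<dots> = piece_E i" using component_Aut[OF i] by (simp add: carrier_Aut_or)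
  finally show ?thesis .
qed

lemma inj_on_glue: "inj_on (glue h) V"
proof (rule inj_onI)
  have same: "x = y" if ij: "i < j" "j < length Gs" and x: "x \<in> piece_V i" and y: "y \<in> piece_V j"
    and eq: "h i x = h j y" for i j x y
  proof -
    have i: "i < length Gs" using ij by simp
    have "h i x \<in> piece_V i" "h j y \<in> piece_V j"
      using x y Aut_or_mem_iff[OF component_Aut[OF i]] Aut_or_mem_iff[OF component_Aut[OF ij(2)]] by simp_all
    then have "j = Suc i" "h j y = joint j" using piece_inter[OF ij] eq by simp_all
    then have "h i x = h i (joint (Suc i))" "h j y = h j (joint j)"
      using eq component_Aut[OF i] component_Aut[OF ij(2)] by (simp_all add: carrier_Aut_or)
    then show "x = y"
      using Aut_or_inj[OF component_Aut[OF i]] Aut_or_inj[OF component_Aut[OF ij(2)]] \<open>j = Suc i\<close>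
      by (metis injD)
  qed
  fix x y assume "x \<in> V" "y \<in> V" and eq: "glue h x = glue h y"
  then obtain i j where i: "i < length Gs" "x \<in> piece_V i" and j: "j < length Gs" "y \<in> piece_V j"
    using V_eq by auto
  have "h i x = h j y" using eq glue_eq[OF i] glue_eq[OF j] by simp
  then show "x = y"
  proof (cases i j rule: linorder_cases)
    case less
    then show ?thesis using same[OF less j(1) i(2) j(2)] \<open>h i x = h j y\<close> by simp
  next
    case equal
    then show ?thesis
      using \<open>h i x = h j y\<close> i j component_Aut[OF i(1)]
      by (auto simp: carrier_Aut_or bij_betw_def dest: inj_onD)
  next
    case greater
    then show ?thesis using same[OF greater i(1) j(2) i(2)] \<open>h i x = h j y\<close> by simp
  qed
qed

lemma glue_in_Aut_or: "glue h \<in> carrier (Aut_or V E s t)"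
  unfolding carrier_Aut_or
proof (intro conjI allI impI)
  have "glue h ` V = V"
    using glue_image_piece_V by (simp add: V_eq image_UN)
  then show "bij_betw (glue h) V V" using inj_on_glue by (simp add: bij_betw_def)
  show "(\<lambda>e. glue h ` e) ` E = E"
    using glue_image_piece_E by (simp add: E_eq image_UN)
  show "glue h s = s"
    using glue_eq[OF length_pos joint_in_piece(1)[OF length_pos]] component_Aut[OF length_pos]
    by (simp add: carrier_Aut_or joint_0)
  define m where "m = length Gs - 1"
  have m: "m < length Gs" "joint (Suc m) = t" using length_pos joint_length by (simp_all add: m_def)
  show "glue h t = t"
    using glue_eq[OF m(1) joint_in_piece(2)[OF m(1)]] component_Aut[OF m(1)]
    by (simp add: carrier_Aut_or m(2))
next
  fix x assume "x \<notin> V"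
  then show "glue h x = x" using V_eq by (auto simp: glue_def)
qed

lemma restrictions_glue: "restrictions (glue h) = h"
proof
  fix i
  show "restrictions (glue h) i = h i"
  proof (cases "i < length Gs")
    case i: True
    show ?thesis
    proof
      fix x
      show "restrictions (glue h) i x = h i x"
      proof (cases "x \<in> piece_V i")
        case True
        then show ?thesis using i glue_eq[OF i True] by (simp add: restrictions_def)
      next
        case False
        then show ?thesis using i component_Aut[OF i] by (simp add: restrictions_def carrier_Aut_or)
      qed
    qed
  next
    case False
    then show ?thesis
      using PiE_arb[OF h[unfolded carrier_product_group], of i] by (simp add: restrictions_def)
  qed
qed

end

end

locale serial_decomposition_nonseparable = serial_decomposition +
  assumes no_separating_vertex_pieces:
    "\<And>i. i < length Gs \<Longrightarrow> no_separating_vertex (cV (Gs ! i)) (cE (Gs ! i)) (cs (Gs ! i)) (ct (Gs ! i))"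
begin

lemma reach_piece_avoiding:
  assumes i: "i < length Gs" and u: "u \<noteq> joint i" "u \<noteq> joint (Suc i)"
  shows "reach E (V - {u}) (joint i) (joint (Suc i))"
proof -
  have "reach (piece_E i) (piece_V i - {u}) (joint i) (joint (Suc i))"
    using no_separating_vertex_pieces[OF i] u i
    by (simp add: no_separating_vertex_def cs_eq_joint ct_eq_joint)
  then show ?thesis
    by (rule reach_mono[OF _ piece_E_subset[OF i]]) (use piece_V_subset[OF i] in auto)
qed

lemma separators_joint:
  assumes j: "0 < j" "j \<le> length Gs"
  shows "separators V E s (joint j) = joint ` {1..j}"
proof
  show "separators V E s (joint j) \<subseteq> joint ` {1..j}"
  proof
    fix u assume u: "u \<in> separators V E s (joint j)"
    show "u \<in> joint ` {1..j}"
    proof (rule ccontr)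
      assume "u \<notin> joint ` {1..j}"
      then have avoid: "u \<noteq> joint p" if "p \<le> j" for p
        using u joint_0 that by (cases p) (auto simp: separators_def)
      have "reach E (V - {u}) (joint 0) (joint j)"
      proof (rule rtranclp_chain)
        fix p assume "0 \<le> p" "p < j"
        then show "reach E (V - {u}) (joint p) (joint (Suc p))"
          using avoid[of p] avoid[of "Suc p"] j by (intro reach_piece_avoiding) auto
      qed simp
      then show False using u joint_0 by (simp add: separators_def)
    qed
  qed
qed (use joint_in_separators j in auto)

lemma card_separators_joint:
  "0 < j \<Longrightarrow> j \<le> length Gs \<Longrightarrow> card (separators V E s (joint j)) = j"
  using separators_joint card_image[OF inj_on_subset[OF inj_on_joint, of "{1..j}"]] by simp

context
  fixes f
  assumes f: "f \<in> carrier (Aut_or V E s t)"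
begin

(* f permutes the separators of t, which are the joints 1, ..., length Gs, and joint j is the
   only one of them with exactly j separators. *)
lemma Aut_or_fixes_joint:
  assumes j: "j \<le> length Gs"
  shows "f (joint j) = joint j"
proof (cases "j = 0")
  case True
  then show ?thesis using f joint_0 by (simp add: carrier_Aut_or)
next
  case False
  have seps_t: "separators V E s t = joint ` {1..length Gs}"
    using separators_joint[of "length Gs"] length_pos joint_length by simp
  have "f ` separators V E s t = separators V E s t"
    using separators_Aut_or[OF f, of t] f by (simp add: carrier_Aut_or)
  moreover have "joint j \<in> separators V E s t" using seps_t j False by auto
  ultimately have "f (joint j) \<in> joint ` {1..length Gs}" using seps_t by blast
  then obtain j' where j': "1 \<le> j'" "j' \<le> length Gs" "f (joint j) = joint j'" by auto
  have "j' = card (separators V E s (joint j'))"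
    using card_separators_joint j' by simp
  also have "\<dots> = card (f ` separators V E s (joint j))"
    using separators_Aut_or[OF f, of "joint j"] j'(3) by simp
  also have "\<dots> = card (separators V E s (joint j))"
    using card_image[OF inj_on_subset[OF Aut_or_inj[OF f] subset_UNIV]] by simp
  also have "\<dots> = j"
    using card_separators_joint False j by simp
  finally show ?thesis using j'(3) by simp
qed

lemma Aut_or_joint_iff: "j \<le> length Gs \<Longrightarrow> f v = joint j \<longleftrightarrow> v = joint j"
  using Aut_or_fixes_joint Aut_or_inj[OF f] by (metis injD)

lemma Aut_or_mem_prefix_iff:
  assumes l: "l \<le> length Gs"
  shows "f v \<in> prefix l \<longleftrightarrow> v \<in> prefix l"
proof (cases "l = 0")
  case True
  then show ?thesis by (simp add: prefix_def)
next
  case False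
  have "reach E (V - {joint l}) s (f v) \<longleftrightarrow> reach E (V - {joint l}) s v"
    using Aut_or_reach_avoiding_iff[OF f, of "joint l" s v] Aut_or_fixes_joint[OF l] f
    by (simp add: carrier_Aut_or)
  then show ?thesis
    using prefix_eq[of l] False l Aut_or_joint_iff[OF l, of v] by simp
qed

lemma Aut_or_mem_piece_iff:
  assumes i: "i < length Gs"
  shows "f v \<in> piece_V i \<longleftrightarrow> v \<in> piece_V i"
  using piece_eq_prefix_diff[OF i] Aut_or_mem_prefix_iff[of i v] Aut_or_mem_prefix_iff[of "Suc i" v]
    Aut_or_joint_iff[of i v] i
  by auto

lemma Aut_or_image_piece_E:
  assumes i: "i < length Gs"
  shows "(\<lambda>e. f ` e) ` piece_E i = piece_E i"
proof
  have fE: "(\<lambda>e. f ` e) ` E = E" using f by (simp add: carrier_Aut_or)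
  show "(\<lambda>e. f ` e) ` piece_E i \<subseteq> piece_E i"
  proof
    fix e' assume "e' \<in> (\<lambda>e. f ` e) ` piece_E i"
    then obtain e where e: "e \<in> piece_E i" "e' = f ` e" by auto
    have "f ` e \<in> E" using e(1) piece_E_subset[OF i] fE by blast
    moreover have "f ` e \<subseteq> piece_V i"
      using piece_edge_subset[OF i e(1)] Aut_or_mem_piece_iff[OF i] by auto
    ultimately show "e' \<in> piece_E i" using edge_in_piece_E i e(2) by simp
  qed
  show "piece_E i \<subseteq> (\<lambda>e. f ` e) ` piece_E i"
  proof
    fix e' assume e': "e' \<in> piece_E i"
    then have "e' \<in> (\<lambda>e. f ` e) ` E" using piece_E_subset[OF i] fE by auto
    then obtain e where e: "e \<in> E" "e' = f ` e" by auto
    have "e \<subseteq> piece_V i"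
      using piece_edge_subset[OF i e'] e(2) Aut_or_mem_piece_iff[OF i] by auto
    then show "e' \<in> (\<lambda>e. f ` e) ` piece_E i" using edge_in_piece_E[OF e(1) i] e(2) by auto
  qed
qed

lemma restrictions_in_carrier: "restrictions f \<in> carrier (product_group {..<length Gs} piece_Aut)"
proof -
  have "(\<lambda>x. if x \<in> piece_V i then f x else x) \<in> carrier (piece_Aut i)" if i: "i < length Gs" for i
    unfolding piece_Aut_eq[OF i]
  proof (rule restrict_in_Aut_or)
    show "inj_on f (piece_V i)" using inj_on_subset[OF Aut_or_inj[OF f] subset_UNIV] .
    show "f ` piece_V i = piece_V i" using Aut_or_image_eq[OF f] Aut_or_mem_piece_iff[OF i] by blast
    show "(\<lambda>e. f ` e) ` piece_E i = piece_E i" by (rule Aut_or_image_piece_E[OF i])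
    show "f (joint i) = joint i" "f (joint (Suc i)) = joint (Suc i)"
      using Aut_or_fixes_joint i by simp_all
  qed (use i joint_in_piece piece_edge_subset in auto)
  then show ?thesis by (simp add: restrictions_def)
qed

end

lemma restrictions_mult:
  assumes "f \<in> carrier (Aut_or V E s t)" "g \<in> carrier (Aut_or V E s t)"
  shows "restrictions (f \<otimes>\<^bsub>Aut_or V E s t\<^esub> g) =
    restrictions f \<otimes>\<^bsub>product_group {..<length Gs} piece_Aut\<^esub> restrictions g"
proof -
  have "restrictions (f \<circ> g) i = restrictions f i \<circ> restrictions g i" if "i < length Gs" for i
    using Aut_or_mem_piece_iff[OF assms(2) that] that by (auto simp: restrictions_def)
  then have "restrictions (f \<circ> g) = (\<lambda>i\<in>{..<length Gs}. restrictions f i \<circ> restrictions g i)"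
    by (auto simp: restrictions_def)
  then show ?thesis by simp
qed

lemma inj_on_restrictions: "inj_on restrictions (carrier (Aut_or V E s t))"
proof (rule inj_onI)
  fix f g
  assume f: "f \<in> carrier (Aut_or V E s t)" and g: "g \<in> carrier (Aut_or V E s t)"
    and eq: "restrictions f = restrictions g"
  show "f = g"
  proof
    fix x
    show "f x = g x"
    proof (cases "x \<in> V")
      case True
      then obtain i where i: "i < length Gs" "x \<in> piece_V i" using V_eq by auto
      then show ?thesis using fun_cong[OF fun_cong[OF eq, of i], of x] by (simp add: restrictions_def)
    next
      case False
      then show ?thesis using f g by (simp add: carrier_Aut_or)
    qed
  qed
qed

theorem restrictions_iso:
  "restrictions \<in> iso (Aut_or V E s t) (product_group {..<length Gs} piece_Aut)"
proof -
  have hom: "restrictions \<in> hom (Aut_or V E s t) (product_group {..<length Gs} piece_Aut)"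
    by (intro homI restrictions_in_carrier restrictions_mult)
  have "h \<in> restrictions ` carrier (Aut_or V E s t)"
    if h: "h \<in> carrier (product_group {..<length Gs} piece_Aut)" for h
    by (rule image_eqI[where f = restrictions, OF restrictions_glue[OF h, symmetric] glue_in_Aut_or[OF h]])
  then have "restrictions ` carrier (Aut_or V E s t) = carrier (product_group {..<length Gs} piece_Aut)"
    using restrictions_in_carrier by blast
  then show ?thesis using hom inj_on_restrictions by (simp add: iso_def bij_betw_def)
qed

end

lemma serial_decomposition_nonseparable_if_osp:
  assumes "serial_cond V E s t Gs"
    and osp: "\<forall>i < length Gs. osp (cV (Gs ! i)) (cE (Gs ! i)) (cs (Gs ! i)) (ct (Gs ! i))"
    and non_serial: "\<forall>i < length Gs. non_serial (cV (Gs ! i)) (cE (Gs ! i)) (cs (Gs ! i)) (ct (Gs ! i))"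
  shows "serial_decomposition_nonseparable V E s t Gs"
proof (intro serial_decomposition_nonseparable.intro serial_decomposition_nonseparable_axioms.intro)
  show "serial_decomposition V E s t Gs"
  proof (rule serial_decomposition.intro[OF assms(1)])
    fix i assume "i < length Gs"
    with osp show "two_terminal (cV (Gs ! i)) (cE (Gs ! i)) (cs (Gs ! i)) (ct (Gs ! i))"
      by (simp add: osp_two_terminal)
  qed
next
  fix i assume "i < length Gs"
  with osp non_serial show "no_separating_vertex (cV (Gs ! i)) (cE (Gs ! i)) (cs (Gs ! i)) (ct (Gs ! i))"
    by (simp add: osp_no_separating_vertex)
qed

theorem theorem5p3:
  fixes V :: "'a set" and E :: "'a set set" and s t :: 'a and Gs :: "'a comp list"
  assumes "serial_cond V E s t Gs"
    and "\<forall>i < length Gs. osp (cV (Gs ! i)) (cE (Gs ! i)) (cs (Gs ! i)) (ct (Gs ! i))"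
    and "\<forall>i < length Gs. non_serial (cV (Gs ! i)) (cE (Gs ! i)) (cs (Gs ! i)) (ct (Gs ! i))"
  shows "Aut_or V E s t \<cong>
           product_group {..<length Gs} (\<lambda>i. Aut_or (cV (Gs ! i)) (cE (Gs ! i)) (cs (Gs ! i)) (ct (Gs ! i)))"
proof -
  interpret serial_decomposition_nonseparable V E s t Gs
    using assms by (rule serial_decomposition_nonseparable_if_osp)
  show ?thesis by (rule is_isoI[OF restrictions_iso])
qed

end
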